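(* Let $g$ be the Lorentzian form on $\mathbb{R}^4$ with matrix $\mathrm{diag}(1,1,1,-c^2)$ in the canonical basis ($c>0$), and let $\mathcal{L}^{\uparrow}_+$ be the proper orthochronous Lorentz group of $g$ (the linear maps preserving $g$, with determinant $1$, and preserving the time orientation). If $\Lambda$ is an additive subgroup of $\mathbb{R}^4$ with $L(\Lambda)\subseteq\Lambda$ for all $L\in\mathcal{L}^{\uparrow}_+$, then $\Lambda=\{0\}$ or $\Lambda=\mathbb{R}^4$. *)

theory Defs
  imports "HOL-Analysis.Analysis"
begin

definition lorentz_form :: "real \<Rightarrow> real^4 \<Rightarrow> real^4 \<Rightarrow> real" where
  "lorentz_form c x y = x$1 * y$1 + x$2 * y$2 + x$3 * y$3 - c^2 * (x$4 * y$4)"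

definition future_timelike :: "real \<Rightarrow> real^4 \<Rightarrow> bool" where
  "future_timelike c x \<longleftrightarrow> lorentz_form c x x < 0 \<and> x$4 > 0"

definition proper_orthochronous_lorentz :: "real \<Rightarrow> (real^4^4) set" where
  "proper_orthochronous_lorentz c =
     {L. (\<forall>x y. lorentz_form c (L *v x) (L *v y) = lorentz_form c x y)
         \<and> det L = 1
         \<and> (\<forall>x. future_timelike c x \<longrightarrow> future_timelike c (L *v x))}"

definition additive_subgroup :: "('a::ab_group_add) set \<Rightarrow> bool" where
  "additive_subgroup S \<longleftrightarrow> 0 \<in> S \<and> (\<forall>x\<in>S. \<forall>y\<in>S. x + y \<in> S) \<and> (\<forall>x\<in>S. - x \<in> S)"

end

theory Submission
  imports Defs
begin

text \<open>
  For a rotation \<open>R\<^sub>\<theta>\<close> in the \<open>(x\<^sub>1, x\<^sub>k)\<close>-plane, \<open>R\<^sub>\<theta>\<^sup>2 y + R\<^sub>-\<^sub>\<theta>\<^sup>2 y - 2 y\<close> is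
  \<open>-4 sin\<^sup>2 \<theta>\<close> times the projection of \<open>y\<close> onto that plane. Hence an invariant subgroup
  \<open>\<Lambda>\<close> contains all multiples in \<open>[0, 1]\<close>, and therefore (adding them up) all real
  multiples, of the projections of its elements. A nonzero element of \<open>\<Lambda>\<close> can be moved by
  a rotation or a boost to one with \<open>x\<^sub>1 \<noteq> 0\<close>; projecting it onto the \<open>(x\<^sub>1, x\<^sub>2)\<close>- and then
  the \<open>(x\<^sub>1, x\<^sub>3)\<close>-plane puts the line \<open>\<real> e\<^sub>1\<close> into \<open>\<Lambda>\<close>, and quarter turns and a boost
  carry it to the other coordinate axes.

  Only squares of rotations and boosts are used: a linear map preserving the form has
  determinant \<open>\<plusminus>1\<close>, so its square is in the proper orthochronous group without any
  determinant having to be computed.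
\<close>

lemma additive_subgroup_add:
  "additive_subgroup S \<Longrightarrow> x \<in> S \<Longrightarrow> y \<in> S \<Longrightarrow> x + y \<in> S"
  by (simp add: additive_subgroup_def)

lemma additive_subgroup_minus:
  "additive_subgroup S \<Longrightarrow> x \<in> S \<Longrightarrow> - x \<in> S"
  by (simp add: additive_subgroup_def)

lemma additive_subgroup_diff:
  "additive_subgroup S \<Longrightarrow> x \<in> S \<Longrightarrow> y \<in> S \<Longrightarrow> x - y \<in> S"
  by (metis additive_subgroup_add additive_subgroup_minus diff_conv_add_uminus)

lemma additive_subgroup_sum:
  assumes "additive_subgroup S" and "\<And>i. i \<in> A \<Longrightarrow> f i \<in> S"
  shows "sum f A \<in> S"
  using assms(2)
proof (induction A rule: infinite_finite_induct)
  case (insert i A)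
  then show ?case by (simp add: additive_subgroup_add[OF assms(1)])
qed (use assms(1) in \<open>simp_all add: additive_subgroup_def\<close>)

lemma additive_subgroup_of_nat_scaleR:
  fixes v :: "'a::real_vector"
  assumes "additive_subgroup S" and "v \<in> S"
  shows "real n *\<^sub>R v \<in> S"
  using additive_subgroup_sum[OF assms(1), of "{..<n}" "\<lambda>_. v"] assms(2)
  by (simp add: sum_constant_scaleR)

lemma additive_subgroup_scaleR_if_unit_interval:
  fixes v :: "'a::real_vector"
  assumes S: "additive_subgroup S" and unit: "\<And>s. 0 \<le> s \<Longrightarrow> s \<le> 1 \<Longrightarrow> s *\<^sub>R v \<in> S"
  shows "t *\<^sub>R v \<in> S"
proof -
  define n where "n = nat \<lceil>\<bar>t\<bar>\<rceil> + 1"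
  have "real n \<ge> 1" "real n \<ge> \<bar>t\<bar>"
    unfolding n_def by linarith+
  then have "real n *\<^sub>R ((\<bar>t\<bar> / real n) *\<^sub>R v) \<in> S"
    by (intro additive_subgroup_of_nat_scaleR[OF S] unit) auto
  moreover have "real n *\<^sub>R ((\<bar>t\<bar> / real n) *\<^sub>R v) = \<bar>t\<bar> *\<^sub>R v"
    using \<open>real n \<ge> 1\<close> by simp
  ultimately have "\<bar>t\<bar> *\<^sub>R v \<in> S"
    by metis
  then show ?thesis
    by (cases "t \<ge> 0") (auto dest: additive_subgroup_minus[OF S])
qed

definition lorentz_matrix :: "real \<Rightarrow> real^4^4" where
  "lorentz_matrix c = (\<chi> i j. if i = j then (if i = 4 then - c\<^sup>2 else 1) else 0)"

lemma lorentz_matrix_mult_vector: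
  "lorentz_matrix c *v y = (\<chi> i. (if i = 4 then - c\<^sup>2 else 1) * y$i)"
  by (simp add: lorentz_matrix_def matrix_vector_mult_def vec_eq_iff if_distrib[of "\<lambda>a. a * _"]
      cong: if_cong)

lemma lorentz_form_eq_inner_lorentz_matrix: "lorentz_form c x y = x \<bullet> (lorentz_matrix c *v y)"
  by (simp add: lorentz_form_def lorentz_matrix_mult_vector inner_vec_def sum_4)

lemma det_lorentz_matrix: "det (lorentz_matrix c) = - c\<^sup>2"
proof -
  have "det (lorentz_matrix c) = (\<Prod>i\<in>UNIV. lorentz_matrix c $ i $ i)"
    by (rule det_diagonal) (simp add: lorentz_matrix_def)
  also have "\<dots> = - c\<^sup>2"
    unfolding UNIV_4 by (simp add: lorentz_matrix_def)
  finally show ?thesis .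
qed

lemma lorentz_matrix_congruence:
  assumes "\<And>x y. lorentz_form c (M *v x) (M *v y) = lorentz_form c x y"
  shows "transpose M ** lorentz_matrix c ** M = lorentz_matrix c"
proof -
  have "x \<bullet> ((transpose M ** lorentz_matrix c ** M) *v y) = x \<bullet> (lorentz_matrix c *v y)" for x y
  proof -
    have "M *v x = x v* transpose M"
      by (metis transpose_matrix_vector transpose_transpose)
    then have "x \<bullet> (lorentz_matrix c *v y) = (x v* transpose M) \<bullet> (lorentz_matrix c *v (M *v y))"
      using assms[of x y] by (simp add: lorentz_form_eq_inner_lorentz_matrix)
    also have "\<dots> = x \<bullet> ((transpose M ** lorentz_matrix c ** M) *v y)"
      unfolding dot_lmul_matrix matrix_vector_mul_assoc matrix_mul_assoc ..
    finally show ?thesis ..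
  qed
  then have "(transpose M ** lorentz_matrix c ** M) *v y = lorentz_matrix c *v y" for y
    by (metis vector_eq_ldot)
  then show ?thesis
    by (simp add: matrix_eq)
qed

lemma det_square_eq_1_if_preserves_lorentz_form:
  assumes "c \<noteq> 0" and "\<And>x y. lorentz_form c (M *v x) (M *v y) = lorentz_form c x y"
  shows "det M * det M = 1"
proof -
  have "det M * det (lorentz_matrix c) * det M = det (lorentz_matrix c)"
    using arg_cong[OF lorentz_matrix_congruence[OF assms(2)], of det] by (simp add: det_mul)
  then show ?thesis
    using assms(1) by (simp add: det_lorentz_matrix)
qed

lemma self_compose_in_proper_orthochronous_lorentz:
  assumes "c \<noteq> 0" and f: "linear f"
    and preserves: "\<And>x y. lorentz_form c (f x) (f y) = lorentz_form c x y"
    and future: "\<And>x. future_timelike c x \<Longrightarrow> future_timelike c (f x)"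
  shows "\<exists>L \<in> proper_orthochronous_lorentz c. \<forall>x. L *v x = f (f x)"
proof
  have f_eq: "matrix f *v x = f x" for x
    using matrix_vector_mul(2)[OF f] by metis
  show square_eq: "\<forall>x. (matrix f ** matrix f) *v x = f (f x)"
    by (simp add: f_eq flip: matrix_vector_mul_assoc)
  have "det (matrix f) * det (matrix f) = 1"
    using det_square_eq_1_if_preserves_lorentz_form[OF assms(1), of "matrix f"]
    by (simp add: f_eq preserves)
  then show "matrix f ** matrix f \<in> proper_orthochronous_lorentz c"
    unfolding proper_orthochronous_lorentz_def by (simp add: det_mul square_eq preserves future)
qed

lemma vec4_eq_iff: "(x::'a^4) = y \<longleftrightarrow> x$1 = y$1 \<and> x$2 = y$2 \<and> x$3 = y$3 \<and> x$4 = y$4"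
  by (simp add: vec_eq_iff forall_4)

definition spatial_rotation :: "4 \<Rightarrow> real \<Rightarrow> real \<Rightarrow> real^4 \<Rightarrow> real^4" where
  "spatial_rotation k p q x =
     (\<chi> i. if i = 1 then p * x$1 - q * x$k else if i = k then q * x$1 + p * x$k else x$i)"

lemma linear_spatial_rotation: "linear (spatial_rotation k p q)"
  by (rule linearI) (simp_all add: spatial_rotation_def vec_eq_iff distrib_left right_diff_distrib)

lemma spatial_rotation_preserves_lorentz_form:
  assumes "k = 2 \<or> k = 3" and "p\<^sup>2 + q\<^sup>2 = 1"
  shows "lorentz_form c (spatial_rotation k p q x) (spatial_rotation k p q y) = lorentz_form c x y"
  \<comment> \<open>\<open>algebra\<close> fails if the hypothesis \<open>k = 2\<close>, an equation in the ring \<open>4\<close>, is left in place\<close>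
  using assms
  by (elim disjE) (simp_all add: lorentz_form_def spatial_rotation_def, (thin_tac "k = _", algebra)+)

lemma spatial_rotation_time_component: "k \<noteq> 4 \<Longrightarrow> spatial_rotation k p q x $ 4 = x$4"
  by (simp add: spatial_rotation_def)

lemma spatial_rotation_preserves_future_timelike:
  assumes "k = 2 \<or> k = 3" and "p\<^sup>2 + q\<^sup>2 = 1" and "future_timelike c x"
  shows "future_timelike c (spatial_rotation k p q x)"
  using assms spatial_rotation_preserves_lorentz_form[OF assms(1,2), of c x x]
  by (auto simp: future_timelike_def spatial_rotation_time_component)

text \<open>For \<open>a\<^sup>2 - c\<^sup>2 d\<^sup>2 = 1\<close> and \<open>a > 0\<close>, the boost in the \<open>(x\<^sub>1, x\<^sub>4)\<close>-plane with
  \<open>cosh \<phi> = a\<close> and \<open>sinh \<phi> = c d\<close>.\<close>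

definition lorentz_boost :: "real \<Rightarrow> real \<Rightarrow> real \<Rightarrow> real^4 \<Rightarrow> real^4" where
  "lorentz_boost c a d x =
     (\<chi> i. if i = 1 then a * x$1 + c\<^sup>2 * d * x$4 else if i = 4 then d * x$1 + a * x$4 else x$i)"

lemma lorentz_boost_component [simp]:
  "lorentz_boost c a d x $ 1 = a * x$1 + c\<^sup>2 * d * x$4"
  "lorentz_boost c a d x $ 2 = x$2"
  "lorentz_boost c a d x $ 3 = x$3"
  "lorentz_boost c a d x $ 4 = d * x$1 + a * x$4"
  by (simp_all add: lorentz_boost_def)

lemma linear_lorentz_boost: "linear (lorentz_boost c a d)"
  by (rule linearI) (simp_all add: vec4_eq_iff algebra_simps)

lemma lorentz_boost_preserves_lorentz_form:
  assumes "a\<^sup>2 - c\<^sup>2 * d\<^sup>2 = 1"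
  shows "lorentz_form c (lorentz_boost c a d x) (lorentz_boost c a d y) = lorentz_form c x y"
  using assms unfolding lorentz_form_def by simp algebra

lemma lorentz_boost_preserves_future_timelike:
  assumes ad: "a\<^sup>2 - c\<^sup>2 * d\<^sup>2 = 1" and "a > 0" and x: "future_timelike c x"
  shows "future_timelike c (lorentz_boost c a d x)"
proof -
  have timelike: "lorentz_form c x x < 0" and "x$4 > 0"
    using x by (auto simp: future_timelike_def)
  have "(x$1)\<^sup>2 \<le> (x$1)\<^sup>2 + (x$2)\<^sup>2 + (x$3)\<^sup>2"
    by simp
  also have "\<dots> < c\<^sup>2 * (x$4)\<^sup>2"
    using timelike by (simp add: lorentz_form_def power2_eq_square)
  finally have "d\<^sup>2 * (x$1)\<^sup>2 \<le> d\<^sup>2 * (c\<^sup>2 * (x$4)\<^sup>2)"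
    by (intro mult_left_mono) simp_all
  then have "\<bar>d * x$1\<bar>\<^sup>2 \<le> c\<^sup>2 * d\<^sup>2 * (x$4)\<^sup>2"
    by (simp add: power_mult_distrib ac_simps)
  also have "\<dots> < (1 + c\<^sup>2 * d\<^sup>2) * (x$4)\<^sup>2"
    using \<open>x$4 > 0\<close> by (simp add: distrib_right)
  also have "\<dots> = (a * x$4)\<^sup>2"
    using ad by (simp add: power_mult_distrib)
  finally have "\<bar>d * x$1\<bar> < a * x$4"
    by (rule power2_less_imp_less) (use \<open>a > 0\<close> \<open>x$4 > 0\<close> in simp)
  then have "lorentz_boost c a d x $ 4 > 0"
    by simp
  then show ?thesis
    using lorentz_boost_preserves_lorentz_form[OF ad, of x x] timelike
    by (simp add: future_timelike_def)
qed

definition coordinate_plane_part :: "4 \<Rightarrow> real^4 \<Rightarrow> real^4" where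
  "coordinate_plane_part k y = (\<chi> i. if i = 1 \<or> i = k then y$i else 0)"

lemma spatial_rotation_square_symmetrized:
  assumes "k = 2 \<or> k = 3" and "p\<^sup>2 + q\<^sup>2 = 1"
  shows "spatial_rotation k p q (spatial_rotation k p q y)
      + spatial_rotation k p (- q) (spatial_rotation k p (- q) y) - 2 *\<^sub>R y
      = - (4 * q\<^sup>2) *\<^sub>R coordinate_plane_part k y"
  using assms
  by (elim disjE) (simp_all add: spatial_rotation_def coordinate_plane_part_def vec4_eq_iff,
      (thin_tac "k = _", algebra)+)

lemma spatial_rotation_square_quarter_turn:
  assumes "k = 2 \<or> k = 3"
  shows "spatial_rotation k (sqrt 2 / 2) (sqrt 2 / 2) (spatial_rotation k (sqrt 2 / 2) (sqrt 2 / 2) x)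
      = (\<chi> i. if i = 1 then - x$k else if i = k then x$1 else x$i)"
  using assms
  by (elim disjE) (simp_all add: spatial_rotation_def vec4_eq_iff algebra_simps)

locale lorentz_invariant_subgroup =
  fixes c :: real and \<Lambda> :: "(real^4) set"
  assumes c_pos: "c > 0"
    and subgroup: "additive_subgroup \<Lambda>"
    and invariant: "\<And>L x. L \<in> proper_orthochronous_lorentz c \<Longrightarrow> x \<in> \<Lambda> \<Longrightarrow> L *v x \<in> \<Lambda>"
begin

lemma self_compose_mem:
  assumes "linear f" and "\<And>x y. lorentz_form c (f x) (f y) = lorentz_form c x y"
    and "\<And>x. future_timelike c x \<Longrightarrow> future_timelike c (f x)" and "x \<in> \<Lambda>"
  shows "f (f x) \<in> \<Lambda>"
proof -
  obtain L where "L \<in> proper_orthochronous_lorentz c" and "\<forall>x. L *v x = f (f x)"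
    using self_compose_in_proper_orthochronous_lorentz[OF _ assms(1-3)] c_pos by auto
  then show ?thesis
    using invariant assms(4) by metis
qed

lemma spatial_rotation_square_mem:
  assumes "k = 2 \<or> k = 3" and "p\<^sup>2 + q\<^sup>2 = 1" and "x \<in> \<Lambda>"
  shows "spatial_rotation k p q (spatial_rotation k p q x) \<in> \<Lambda>"
  by (rule self_compose_mem[OF linear_spatial_rotation
        spatial_rotation_preserves_lorentz_form[OF assms(1,2)]
        spatial_rotation_preserves_future_timelike[OF assms(1,2)] assms(3)])

lemma quarter_turn_mem:
  assumes "k = 2 \<or> k = 3" and "x \<in> \<Lambda>"
  shows "(\<chi> i. if i = 1 then - x$k else if i = k then x$1 else x$i) \<in> \<Lambda>"
proof -
  have "(sqrt 2 / 2)\<^sup>2 + (sqrt 2 / 2)\<^sup>2 = (1::real)"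
    by (simp add: power_divide)
  from spatial_rotation_square_mem[OF assms(1) this assms(2)] show ?thesis
    by (simp only: spatial_rotation_square_quarter_turn[OF assms(1)])
qed

lemma lorentz_boost_square_mem:
  assumes a: "a\<^sup>2 = 1 + c\<^sup>2" "a > 0" and "x \<in> \<Lambda>"
  shows "lorentz_boost c a 1 (lorentz_boost c a 1 x) \<in> \<Lambda>"
proof -
  have boost: "a\<^sup>2 - c\<^sup>2 * 1\<^sup>2 = 1"
    using a(1) by simp
  show ?thesis
    by (rule self_compose_mem[OF linear_lorentz_boost lorentz_boost_preserves_lorentz_form[OF boost]
          lorentz_boost_preserves_future_timelike[OF boost a(2)] assms(3)])
qed

lemma coordinate_plane_part_scaleR_mem:
  assumes k: "k = 2 \<or> k = 3" and y: "y \<in> \<Lambda>"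
  shows "t *\<^sub>R coordinate_plane_part k y \<in> \<Lambda>"
proof (rule additive_subgroup_scaleR_if_unit_interval[OF subgroup])
  fix s :: real
  assume "0 \<le> s" "s \<le> 1"
  define q where "q = sqrt s / 2"
  have q: "4 * q\<^sup>2 = s" "q\<^sup>2 \<le> 1"
    using \<open>0 \<le> s\<close> \<open>s \<le> 1\<close> by (simp_all add: q_def power_divide)
  define p where "p = sqrt (1 - q\<^sup>2)"
  have pq: "p\<^sup>2 + q\<^sup>2 = 1" "p\<^sup>2 + (- q)\<^sup>2 = 1"
    using q(2) by (simp_all add: p_def)
  have "spatial_rotation k p q (spatial_rotation k p q y)
      + spatial_rotation k p (- q) (spatial_rotation k p (- q) y) - 2 *\<^sub>R y \<in> \<Lambda>"
    using spatial_rotation_square_mem[OF k pq(1) y] spatial_rotation_square_mem[OF k pq(2) y] y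
    unfolding scaleR_2 by (meson additive_subgroup_add additive_subgroup_diff subgroup)
  then have "- (s *\<^sub>R coordinate_plane_part k y) \<in> \<Lambda>"
    by (simp add: spatial_rotation_square_symmetrized[OF k pq(1)] q(1))
  then show "s *\<^sub>R coordinate_plane_part k y \<in> \<Lambda>"
    using additive_subgroup_minus[OF subgroup] by fastforce
qed

lemma ex_mem_first_coordinate_nonzero:
  assumes "x \<in> \<Lambda>" and "x \<noteq> 0"
  shows "\<exists>y\<in>\<Lambda>. y$1 \<noteq> 0"
proof -
  consider "x$1 \<noteq> 0" | k where "k = 2 \<or> k = 3" "x$k \<noteq> 0" | "x$1 = 0" "x$4 \<noteq> 0"
    using assms(2) by (metis vec4_eq_iff zero_index)
  then show ?thesis
  proof cases
    case 1
    then show ?thesis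
      using assms(1) by blast
  next
    case (2 k)
    show ?thesis
      by (rule bexI[OF _ quarter_turn_mem[OF 2(1) assms(1)]]) (simp add: 2(2))
  next
    case 3
    define a where "a = sqrt (1 + c\<^sup>2)"
    have a: "a\<^sup>2 = 1 + c\<^sup>2" "a > 0"
      by (simp_all add: a_def add_pos_nonneg)
    show ?thesis
      by (rule bexI[OF _ lorentz_boost_square_mem[OF a assms(1)]]) (use 3 a(2) c_pos in simp)
  qed
qed

lemma first_axis_line_mem:
  assumes "x \<in> \<Lambda>" and "x \<noteq> 0"
  shows "t *\<^sub>R axis 1 1 \<in> \<Lambda>"
proof -
  obtain y where y: "y \<in> \<Lambda>" "y$1 \<noteq> 0"
    using ex_mem_first_coordinate_nonzero[OF assms] by blast
  have "coordinate_plane_part 2 y \<in> \<Lambda>"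
    using coordinate_plane_part_scaleR_mem[of 2 y 1] y(1) by simp
  then have "(t / y$1) *\<^sub>R coordinate_plane_part 3 (coordinate_plane_part 2 y) \<in> \<Lambda>"
    by (intro coordinate_plane_part_scaleR_mem) simp_all
  moreover have "(t / y$1) *\<^sub>R coordinate_plane_part 3 (coordinate_plane_part 2 y) = t *\<^sub>R axis 1 1"
    using y(2) by (simp add: coordinate_plane_part_def vec4_eq_iff axis_def)
  ultimately show ?thesis
    by simp
qed

lemma axis_line_mem:
  assumes "x \<in> \<Lambda>" and "x \<noteq> 0"
  shows "t *\<^sub>R axis i 1 \<in> \<Lambda>"
proof -
  note e1 = first_axis_line_mem[OF assms]
  consider "i = 1" | "i = 2 \<or> i = 3" | "i = 4"
    using exhaust_4 by blast
  then show ?thesis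
  proof cases
    case 1
    then show ?thesis
      using e1 by simp
  next
    case 2
    define e :: "real^4" where "e = t *\<^sub>R axis 1 1"
    have "(\<chi> j. if j = 1 then - e$i else if j = i then e$1 else e$j) = t *\<^sub>R axis i 1"
      using 2 by (elim disjE) (simp_all add: e_def vec4_eq_iff axis_def)
    then show ?thesis
      using quarter_turn_mem[OF 2 e1[of t, folded e_def]] by simp
  next
    case 3
    define a where "a = sqrt (1 + c\<^sup>2)"
    have a: "a\<^sup>2 = 1 + c\<^sup>2" "a > 0"
      by (simp_all add: a_def add_pos_nonneg)
    define u where "u = t / (2 * a)"
    have "lorentz_boost c a 1 (lorentz_boost c a 1 (u *\<^sub>R axis 1 1))
        - ((a\<^sup>2 + c\<^sup>2) * u) *\<^sub>R axis 1 1 \<in> \<Lambda>" (is "?v \<in> \<Lambda>")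
      by (intro additive_subgroup_diff[OF subgroup] lorentz_boost_square_mem[OF a] e1)
    moreover have "?v = t *\<^sub>R axis 4 1"
      using a(2) by (simp add: vec4_eq_iff axis_def u_def field_simps power2_eq_square)
    ultimately show ?thesis
      using 3 by simp
  qed
qed

lemma eq_UNIV_if_nonzero_mem:
  assumes "x \<in> \<Lambda>" and "x \<noteq> 0"
  shows "\<Lambda> = UNIV"
proof -
  have "(\<Sum>i\<in>UNIV. v$i *\<^sub>R axis i 1) \<in> \<Lambda>" for v :: "real^4"
    by (intro additive_subgroup_sum[OF subgroup] axis_line_mem[OF assms])
  then show ?thesis
    by (auto simp: basis_expansion simp flip: scalar_mult_eq_scaleR)
qed

end

theorem proposition3p8:
  fixes c :: real and \<Lambda> :: "(real^4) set"
  assumes "c > 0"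
    and "additive_subgroup \<Lambda>"
    and "\<And>L x. L \<in> proper_orthochronous_lorentz c \<Longrightarrow> x \<in> \<Lambda> \<Longrightarrow> L *v x \<in> \<Lambda>"
  shows "\<Lambda> = {0} \<or> \<Lambda> = UNIV"
proof -
  interpret lorentz_invariant_subgroup c \<Lambda>
    using assms by unfold_locales
  have "0 \<in> \<Lambda>"
    using assms(2) by (simp add: additive_subgroup_def)
  then show ?thesis
    using eq_UNIV_if_nonzero_mem by blast
qed

end
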